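(* For $i\in\{1,2\}$ let $(\mathcal B_{i,\mathbb R},\mathcal S_i,e_i,m_i)$ be as in the context, let $\mathcal L\in L(\mathcal B_{1,\mathbb R},\mathcal B_{2,\mathbb R})$, $\mathcal L_{\mathbb C}\in L(\mathcal B_{1,\mathbb C},\mathcal B_{2,\mathbb C})$ and $\varepsilon>0$. For $h\in\mathcal C_{1,\mathbb R}$ write $\mathcal L_{\mathbb C}h=a(h)+ib(h)$ with $a(h),b(h)\in\mathcal B_{2,\mathbb R}$. If for each $h\in\mathcal C_{1,\mathbb R}$ \[\varepsilon\mathcal Lh\pm2[\mathcal Lh-a(h)]\in\mathcal C_{2,\mathbb R}\quad\text{and}\quad\varepsilon\mathcal Lh\pm2b(h)\in\mathcal C_{2,\mathbb R},\] then for all $\ell\in\mathcal S_2$ and $h\in\mathcal C_{1,\mathbb R}$, $|\ell(\mathcal L_{\mathbb C}h)-\ell(\mathcal Lh)|\le\varepsilon\,\ell(\mathcal Lh)$.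
   Context: Cone setting. $V$ is a real topological vector space, $\mathcal S\subset V'$ a set of linear functionals such that $\ell(x)=0$ for all $\ell\in\mathcal S$ implies $x=0$, $C_{\mathbb R}=\{h\in V\setminus\{0\}:\ell(h)\ge0\ \forall\ell\in\mathcal S\}$, $e\in C_{\mathbb R}$ such that for every $h\in V$ some $\lambda\ge0$ has $\lambda e-h\in C_{\mathbb R}$. Norm $\|h\|=\inf\{\lambda\ge0:\ell(\lambda e\pm h)\ge0\ \forall\ell\in\mathcal S\}$; $\mathcal B_{\mathbb R}$ the completion; $\mathcal C_{\mathbb R}=\{h\in\mathcal B_{\mathbb R}\setminus\{0\}:\ell(h)\ge0\ \forall\ell\in\mathcal S\}$; there are $m$ in the weak-$*$ closure of the convex hull of $\{\lambda\ell:\lambda>0,\ell\in\mathcal S\}$ and $\kappa\in(0,1)$ with $m(e)=1$, $m(h)\ge\kappa\|h\|$ on $\mathcal C_{\mathbb R}$. $\mathcal B_{\mathbb C}$ is the complexification $\{x+iy:x,y\in\mathcal B_{\mathbb R}\}$ with real functionals extended complex-linearly. Objects of the $i$-th space carry index $i$. *)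

theory Defs
  imports "HOL-Analysis.Analysis"
begin

text \<open>The real cone space: the completed Banach space is modelled by a type of class banach;
  the original space V is a dense linear subspace on which the norm is the cone norm.
  Functionals in S are (extended by continuity to) bounded linear functionals.\<close>

definition cone_of :: "('a::real_vector \<Rightarrow> real) set \<Rightarrow> 'a set" where
  "cone_of S = {h. h \<noteq> 0 \<and> (\<forall>l\<in>S. l h \<ge> 0)}"

definition cone_norm :: "('a::real_vector \<Rightarrow> real) set \<Rightarrow> 'a \<Rightarrow> 'a \<Rightarrow> real" where
  "cone_norm S e h = Inf {lam. lam \<ge> 0 \<and> (\<forall>l\<in>S. l (lam *\<^sub>R e + h) \<ge> 0 \<and> l (lam *\<^sub>R e - h) \<ge> 0)}"

definition pos_hull_funs :: "('a \<Rightarrow> real) set \<Rightarrow> ('a \<Rightarrow> real) set" where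
  "pos_hull_funs S = {g. \<exists>n::nat. \<exists>c ls. n > 0 \<and> (\<forall>i<n. c i > 0 \<and> ls i \<in> S)
       \<and> g = (\<lambda>x. \<Sum>i<n. c i * ls i x)}"

definition in_weak_star_closure :: "'a set \<Rightarrow> ('a \<Rightarrow> real) set \<Rightarrow> ('a \<Rightarrow> real) \<Rightarrow> bool" where
  "in_weak_star_closure V G m \<longleftrightarrow>
     (\<forall>F \<delta>. finite F \<and> F \<subseteq> V \<and> \<delta> > 0 \<longrightarrow> (\<exists>g\<in>G. \<forall>x\<in>F. \<bar>g x - m x\<bar> < \<delta>))"

definition cone_setting ::
  "'a::banach set \<Rightarrow> ('a \<Rightarrow> real) set \<Rightarrow> 'a \<Rightarrow> ('a \<Rightarrow> real) \<Rightarrow> real \<Rightarrow> bool" where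
  "cone_setting V S e m \<kappa> \<longleftrightarrow>
     subspace V \<and> closure V = UNIV \<and>
     (\<forall>l\<in>S. bounded_linear l) \<and>
     (\<forall>x\<in>V. (\<forall>l\<in>S. l x = 0) \<longrightarrow> x = 0) \<and>
     e \<in> V \<and> e \<in> cone_of S \<and>
     (\<forall>h\<in>V. \<exists>lam\<ge>0. lam *\<^sub>R e - h \<in> cone_of S) \<and>
     (\<forall>h\<in>V. norm h = cone_norm S e h) \<and>
     bounded_linear m \<and> in_weak_star_closure V (pos_hull_funs S) m \<and>
     m e = 1 \<and> 0 < \<kappa> \<and> \<kappa> < 1 \<and>
     (\<forall>h\<in>cone_of S. m h \<ge> \<kappa> * norm h)"

text \<open>Complexification: B_C = B_R \<times> B_R, (x,y) standing for x + i y.\<close>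
definition cscale :: "complex \<Rightarrow> 'a::real_vector \<times> 'a \<Rightarrow> 'a \<times> 'a" where
  "cscale c z = (Re c *\<^sub>R fst z - Im c *\<^sub>R snd z, Im c *\<^sub>R fst z + Re c *\<^sub>R snd z)"

definition complex_bounded_linear ::
  "('a::real_normed_vector \<times> 'a \<Rightarrow> 'b::real_normed_vector \<times> 'b) \<Rightarrow> bool" where
  "complex_bounded_linear T \<longleftrightarrow>
     (\<forall>z w. T (z + w) = T z + T w) \<and> (\<forall>c z. T (cscale c z) = cscale c (T z)) \<and>
     (\<exists>K. \<forall>z. norm (T z) \<le> K * norm z)"

definition cext :: "('a \<Rightarrow> real) \<Rightarrow> 'a \<times> 'a \<Rightarrow> complex" where
  "cext l z = Complex (l (fst z)) (l (snd z))"

end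

theory Submission
  imports Defs
begin

text \<open>Write \<open>LC (h, 0) = (a, b)\<close>. The hypotheses place \<open>\<epsilon> L h \<plusminus> 2 (L h - a)\<close> and
  \<open>\<epsilon> L h \<plusminus> 2 b\<close> in the cone, so every \<open>l \<in> S2\<close>, being nonnegative there, gives
  \<open>\<bar>l (L h) - l a\<bar> \<le> \<epsilon> l (L h) / 2\<close> and \<open>\<bar>l b\<bar> \<le> \<epsilon> l (L h) / 2\<close>. These bound the real and
  imaginary parts of \<open>cext l (LC (h, 0)) - l (L h)\<close>, whose modulus is at most their sum.\<close>

lemma cone_setting_bounded_linear:
  assumes "cone_setting V S e m \<kappa>" "l \<in> S"
  shows "bounded_linear l"
proof -
  have "\<forall>l\<in>S. bounded_linear l"
    using assms(1) unfolding cone_setting_def by (elim conjE) assumption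
  then show ?thesis using assms(2) ..
qed

lemma abs_le_if_plus_minus_in_cone:
  assumes "linear l" "l \<in> S" "u + v \<in> cone_of S" "u - v \<in> cone_of S"
  shows "\<bar>l v\<bar> \<le> l u"
proof -
  have "0 \<le> l (u + v)" "0 \<le> l (u - v)"
    using assms(2-4) unfolding cone_of_def by auto
  then show ?thesis
    using linear_add[OF assms(1)] linear_diff[OF assms(1)] by (simp add: abs_le_iff)
qed

lemma cext_minus_of_real:
  "cext l z - complex_of_real r = Complex (l (fst z) - r) (l (snd z))"
  unfolding cext_def by (simp add: complex_eq_iff)

theorem lemma5p18:
  fixes V1 :: "'a::banach set" and S1 :: "('a \<Rightarrow> real) set" and e1 :: 'a
    and m1 :: "'a \<Rightarrow> real" and \<kappa>1 :: real
    and V2 :: "'b::banach set" and S2 :: "('b \<Rightarrow> real) set" and e2 :: 'b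
    and m2 :: "'b \<Rightarrow> real" and \<kappa>2 :: real
    and L :: "'a \<Rightarrow> 'b" and LC :: "'a \<times> 'a \<Rightarrow> 'b \<times> 'b" and \<epsilon> :: real
  assumes "cone_setting V1 S1 e1 m1 \<kappa>1"
    and "cone_setting V2 S2 e2 m2 \<kappa>2"
    and "bounded_linear L"
    and "complex_bounded_linear LC"
    and "\<epsilon> > 0"
    and "\<And>h. h \<in> cone_of S1 \<Longrightarrow>
           \<epsilon> *\<^sub>R L h + 2 *\<^sub>R (L h - fst (LC (h, 0))) \<in> cone_of S2 \<and>
           \<epsilon> *\<^sub>R L h - 2 *\<^sub>R (L h - fst (LC (h, 0))) \<in> cone_of S2 \<and>
           \<epsilon> *\<^sub>R L h + 2 *\<^sub>R snd (LC (h, 0)) \<in> cone_of S2 \<and>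
           \<epsilon> *\<^sub>R L h - 2 *\<^sub>R snd (LC (h, 0)) \<in> cone_of S2"
  shows "\<forall>l\<in>S2. \<forall>h\<in>cone_of S1.
           cmod (cext l (LC (h, 0)) - complex_of_real (l (L h))) \<le> \<epsilon> * l (L h)"
proof (intro ballI)
  fix l h assume l: "l \<in> S2" and h: "h \<in> cone_of S1"
  obtain a b where ab: "LC (h, 0) = (a, b)" by (cases "LC (h, 0)")
  interpret l: bounded_linear l using cone_setting_bounded_linear[OF assms(2) l] .
  have "\<bar>l (2 *\<^sub>R (L h - a))\<bar> \<le> l (\<epsilon> *\<^sub>R L h)" "\<bar>l (2 *\<^sub>R b)\<bar> \<le> l (\<epsilon> *\<^sub>R L h)"
    using assms(6)[OF h] by (simp_all add: ab abs_le_if_plus_minus_in_cone[OF l.linear l])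
  then have "\<bar>l a - l (L h)\<bar> + \<bar>l b\<bar> \<le> \<epsilon> * l (L h)"
    by (simp add: l.scale l.diff)
  then show "cmod (cext l (LC (h, 0)) - complex_of_real (l (L h))) \<le> \<epsilon> * l (L h)"
    using cmod_le[of "Complex (l a - l (L h)) (l b)"] by (simp add: ab cext_minus_of_real)
qed

end
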